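(* A brace $B$ is weakly supersoluble if and only if it is supersoluble.
   Context: A brace (skew left brace) is a set $B$ with two binary operations $+$ and $\cdot$ such that $(B,+)$ and $(B,\cdot)$ are groups and $a(b+c)=ab-a+ac$ for all $a,b,c\in B$. $\lambda_a(b)=-a+ab$ defines a homomorphism $\lambda\colon(B,\cdot)\to\operatorname{Aut}(B,+)$. An ideal is a subset that is a subgroup of both groups, normal in both, and invariant under all $\lambda_b$; quotients by ideals are braces. $\operatorname{Soc}(B)=\operatorname{Ker}\lambda\cap Z(B,+)$. $B$ is supersoluble if there is a finite chain of ideals $\{0\}=I_0\le\dots\le I_n=B$ such that for each $i$, either $(I_{i+1}/I_i,+)$ is infinite cyclic and $I_{i+1}/I_i\le\operatorname{Soc}(B/I_i)$, or $I_{i+1}/I_i$ has prime order. $B$ is weakly supersoluble if there is a finite chain of ideals $\{0\}=I_0\le\dots\le I_n=B$ such that for each $i$, either $(I_{i+1}/I_i,+)$ is an infinite cyclic subgroup contained in the centre of $(B/I_i,+)$, or $I_{i+1}/I_i$ has prime order. *)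

theory Defs
  imports "HOL-Algebra.Algebra" "HOL-Computational_Algebra.Primes"
begin

record 'a brace = "'a partial_object" +
  bplus :: "'a \<Rightarrow> 'a \<Rightarrow> 'a"
  btimes :: "'a \<Rightarrow> 'a \<Rightarrow> 'a"
  bzero :: 'a
  bone :: 'a

definition add_grp :: "('a, 'b) brace_scheme \<Rightarrow> 'a monoid" where
  "add_grp B = \<lparr>carrier = carrier B, monoid.mult = bplus B, monoid.one = bzero B\<rparr>"

definition mul_grp :: "('a, 'b) brace_scheme \<Rightarrow> 'a monoid" where
  "mul_grp B = \<lparr>carrier = carrier B, monoid.mult = btimes B, monoid.one = bone B\<rparr>"

definition bneg :: "('a, 'b) brace_scheme \<Rightarrow> 'a \<Rightarrow> 'a" where
  "bneg B a = inv\<^bsub>add_grp B\<^esub> a"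

definition is_brace :: "('a, 'b) brace_scheme \<Rightarrow> bool" where
  "is_brace B \<longleftrightarrow> group (add_grp B) \<and> group (mul_grp B) \<and>
     (\<forall>a\<in>carrier B. \<forall>b\<in>carrier B. \<forall>c\<in>carrier B.
        btimes B a (bplus B b c) = bplus B (bplus B (btimes B a b) (bneg B a)) (btimes B a c))"

definition blambda :: "('a, 'b) brace_scheme \<Rightarrow> 'a \<Rightarrow> 'a \<Rightarrow> 'a" where
  "blambda B a b = bplus B (bneg B a) (btimes B a b)"

definition brace_ideal :: "'a set \<Rightarrow> ('a, 'b) brace_scheme \<Rightarrow> bool" where
  "brace_ideal I B \<longleftrightarrow> normal I (add_grp B) \<and> normal I (mul_grp B) \<and>
     (\<forall>b\<in>carrier B. blambda B b ` I \<subseteq> I)"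

definition add_centre :: "('a, 'b) brace_scheme \<Rightarrow> 'a set" where
  "add_centre B = {x \<in> carrier B. \<forall>y\<in>carrier B. bplus B x y = bplus B y x}"

definition Soc :: "('a, 'b) brace_scheme \<Rightarrow> 'a set" where
  "Soc B = {a \<in> carrier B. \<forall>b\<in>carrier B. blambda B a b = b} \<inter> add_centre B"

definition quot_brace :: "('a, 'b) brace_scheme \<Rightarrow> 'a set \<Rightarrow> 'a set brace" where
  "quot_brace B I = \<lparr>carrier = rcosets\<^bsub>add_grp B\<^esub> I,
      bplus = set_mult (add_grp B), btimes = set_mult (mul_grp B),
      bzero = I, bone = I\<rparr>"

text \<open>The image J/I of an ideal J \<supseteq> I inside B/I.\<close>
definition quot_sub :: "('a, 'b) brace_scheme \<Rightarrow> 'a set \<Rightarrow> 'a set \<Rightarrow> 'a set set" where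
  "quot_sub B J I = (\<lambda>a. I #>\<^bsub>add_grp B\<^esub> a) ` J"

definition add_inf_cyclic :: "('a, 'b) brace_scheme \<Rightarrow> 'a set \<Rightarrow> bool" where
  "add_inf_cyclic Q Y \<longleftrightarrow> infinite Y \<and>
     (\<exists>g\<in>carrier Q. Y = range (\<lambda>k::int. pow (add_grp Q) g k))"

definition ideal_chain :: "('a, 'b) brace_scheme \<Rightarrow> (nat \<Rightarrow> 'a set) \<Rightarrow> nat \<Rightarrow> bool" where
  "ideal_chain B I n \<longleftrightarrow> I 0 = {bzero B} \<and> I n = carrier B \<and>
     (\<forall>i\<le>n. brace_ideal (I i) B) \<and> (\<forall>i<n. I i \<subseteq> I (Suc i))"

definition supersoluble :: "('a, 'b) brace_scheme \<Rightarrow> bool" where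
  "supersoluble B \<longleftrightarrow> (\<exists>I n. ideal_chain B I n \<and>
     (\<forall>i<n. let Q = quot_brace B (I i); Y = quot_sub B (I (Suc i)) (I i) in
        (add_inf_cyclic Q Y \<and> Y \<subseteq> Soc Q) \<or> Factorial_Ring.prime (card Y)))"

definition weakly_supersoluble :: "('a, 'b) brace_scheme \<Rightarrow> bool" where
  "weakly_supersoluble B \<longleftrightarrow> (\<exists>I n. ideal_chain B I n \<and>
     (\<forall>i<n. let Q = quot_brace B (I i); Y = quot_sub B (I (Suc i)) (I i) in
        (add_inf_cyclic Q Y \<and> Y \<subseteq> add_centre Q) \<or> Factorial_Ring.prime (card Y)))"

end

theory Submission
  imports Defs
begin

(* Soc(Q) lies in the centre of (Q,+), so a supersoluble series is weakly supersoluble.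
  Conversely, let I < K be a step of a weakly supersoluble series whose factor Y = K/I = <g> is
  infinite cyclic and central in (Q,+), Q = B/I. Being an ideal, Y is stable under every lambda_b,
  which acts on it as multiplication by a sign, and under conjugation in (Q,o); on exponents the
  latter is a bijection phi of the integers with phi(l + 2) = phi(l) + phi(2), whence phi(2) = 2
  or -2. Thus 2g o c = c o (+-2g), so lambda_{2g}(c) - c is 0 or -4g; being additive in c, it
  vanishes. Hence 2Y is an infinite cyclic ideal of Q inside Soc(Q) of index 2 in Y, and its
  preimage J in B splits the step into I < J < K with supersoluble factors. *)

lemma add_grp_simps [simp]:
  "carrier (add_grp B) = carrier B" "monoid.mult (add_grp B) = bplus B" "one (add_grp B) = bzero B"
  by (simp_all add: add_grp_def)

lemma mul_grp_simps [simp]: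
  "carrier (mul_grp B) = carrier B" "monoid.mult (mul_grp B) = btimes B" "one (mul_grp B) = bone B"
  by (simp_all add: mul_grp_def)

lemma (in group) inj_int_pow_if_infinite:
  assumes "x \<in> carrier G" and "infinite (range (\<lambda>k::int. x [^] k))"
  shows "inj (\<lambda>k::int. x [^] k)"
  using assms infinite_cyclic_subgroup_int carrier_subgroup_generated_by_singleton
  by (auto simp: inj_def)

lemma (in group_hom) normal_vimage:
  assumes "N \<lhd> H"
  shows "{x \<in> carrier G. h x \<in> N} \<lhd> G"
proof -
  interpret N: normal N H by (rule assms)
  show ?thesis
    unfolding G.normal_inv_iff
  proof (intro conjI ballI G.subgroupI)
    fix x y assume "x \<in> {x \<in> carrier G. h x \<in> N}" "y \<in> {x \<in> carrier G. h x \<in> N}"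
    then show "inv x \<in> {x \<in> carrier G. h x \<in> N}" "x \<otimes> y \<in> {x \<in> carrier G. h x \<in> N}"
      by (simp_all add: N.m_inv_closed N.m_closed)
  next
    fix x y assume "x \<in> carrier G" "y \<in> {x \<in> carrier G. h x \<in> N}"
    then show "x \<otimes> y \<otimes> inv x \<in> {x \<in> carrier G. h x \<in> N}"
      by (simp add: N.inv_op_closed2)
  qed (use N.one_closed in auto)
qed

locale skew_brace =
  fixes B :: "('a, 'b) brace_scheme"
  assumes is_brace: "is_brace B"
begin

sublocale A: group "add_grp B" using is_brace by (simp add: is_brace_def)
sublocale M: group "mul_grp B" using is_brace by (simp add: is_brace_def)

abbreviation add (infixl "\<boxplus>" 65) where "x \<boxplus> y \<equiv> bplus B x y"
abbreviation mult (infixl "\<odot>" 70) where "x \<odot> y \<equiv> btimes B x y"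
abbreviation neg where "neg x \<equiv> inv\<^bsub>add_grp B\<^esub> x"
abbreviation minv where "minv x \<equiv> inv\<^bsub>mul_grp B\<^esub> x"
abbreviation ze where "ze \<equiv> bzero B"
abbreviation lam where "lam \<equiv> blambda B"

lemma lambda_unfold: "lam a b = neg a \<boxplus> a \<odot> b"
  by (simp add: blambda_def bneg_def)

lemma brace_distrib:
  "a \<in> carrier B \<Longrightarrow> b \<in> carrier B \<Longrightarrow> c \<in> carrier B \<Longrightarrow> a \<odot> (b \<boxplus> c) = a \<odot> b \<boxplus> neg a \<boxplus> a \<odot> c"
  using is_brace by (simp add: is_brace_def bneg_def)

lemma closed [simp]:
  "x \<in> carrier B \<Longrightarrow> y \<in> carrier B \<Longrightarrow> x \<boxplus> y \<in> carrier B"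
  "x \<in> carrier B \<Longrightarrow> y \<in> carrier B \<Longrightarrow> x \<odot> y \<in> carrier B"
  "x \<in> carrier B \<Longrightarrow> neg x \<in> carrier B"
  "x \<in> carrier B \<Longrightarrow> minv x \<in> carrier B"
  "ze \<in> carrier B"
  "x \<in> carrier B \<Longrightarrow> y \<in> carrier B \<Longrightarrow> lam x y \<in> carrier B"
  using A.m_closed M.m_closed A.inv_closed M.inv_closed A.one_closed by (simp_all add: lambda_unfold)

lemma add_assoc: "x \<in> carrier B \<Longrightarrow> y \<in> carrier B \<Longrightarrow> z \<in> carrier B \<Longrightarrow> x \<boxplus> y \<boxplus> z = x \<boxplus> (y \<boxplus> z)"
  using A.m_assoc by simp

lemma mult_assoc: "x \<in> carrier B \<Longrightarrow> y \<in> carrier B \<Longrightarrow> z \<in> carrier B \<Longrightarrow> x \<odot> y \<odot> z = x \<odot> (y \<odot> z)"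
  using M.m_assoc by simp

lemma add_simps [simp]:
  "x \<in> carrier B \<Longrightarrow> ze \<boxplus> x = x"
  "x \<in> carrier B \<Longrightarrow> x \<boxplus> ze = x"
  "x \<in> carrier B \<Longrightarrow> neg x \<boxplus> x = ze"
  "x \<in> carrier B \<Longrightarrow> x \<boxplus> neg x = ze"
  "x \<in> carrier B \<Longrightarrow> y \<in> carrier B \<Longrightarrow> neg x \<boxplus> (x \<boxplus> y) = y"
  "x \<in> carrier B \<Longrightarrow> y \<in> carrier B \<Longrightarrow> x \<boxplus> (neg x \<boxplus> y) = y"
  "x \<in> carrier B \<Longrightarrow> neg (neg x) = x"
  "x \<in> carrier B \<Longrightarrow> y \<in> carrier B \<Longrightarrow> neg (x \<boxplus> y) = neg y \<boxplus> neg x"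
  "neg ze = ze"
  using A.l_one A.r_one A.l_inv A.r_inv A.inv_inv A.inv_mult_group A.inv_one
  by (simp_all add: add_assoc[symmetric])

lemma bone_eq_bzero: "bone B = ze"
proof -
  have "bone B \<odot> (ze \<boxplus> ze) = bone B \<odot> ze \<boxplus> neg (bone B) \<boxplus> bone B \<odot> ze"
    using M.one_closed by (intro brace_distrib) simp_all
  then have "neg (bone B) = ze" using M.l_one M.one_closed by (simp add: add_assoc)
  then show ?thesis using M.one_closed add_simps(7)[of "bone B"] by simp
qed

lemma mult_simps [simp]:
  "x \<in> carrier B \<Longrightarrow> ze \<odot> x = x"
  "x \<in> carrier B \<Longrightarrow> x \<odot> ze = x"
  "x \<in> carrier B \<Longrightarrow> minv x \<odot> x = ze"
  "x \<in> carrier B \<Longrightarrow> x \<odot> minv x = ze"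
  "x \<in> carrier B \<Longrightarrow> y \<in> carrier B \<Longrightarrow> minv x \<odot> (x \<odot> y) = y"
  "x \<in> carrier B \<Longrightarrow> y \<in> carrier B \<Longrightarrow> x \<odot> (minv x \<odot> y) = y"
  "x \<in> carrier B \<Longrightarrow> minv (minv x) = x"
  "x \<in> carrier B \<Longrightarrow> y \<in> carrier B \<Longrightarrow> minv (x \<odot> y) = minv y \<odot> minv x"
  "minv ze = ze"
  using M.l_one M.r_one M.l_inv M.r_inv M.inv_inv M.inv_mult_group M.inv_one
  by (simp_all add: mult_assoc[symmetric] bone_eq_bzero)

lemma mult_eq_add_lambda: "a \<in> carrier B \<Longrightarrow> b \<in> carrier B \<Longrightarrow> a \<odot> b = a \<boxplus> lam a b"
  by (simp add: lambda_unfold add_assoc[symmetric])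

lemma lambda_add:
  "a \<in> carrier B \<Longrightarrow> b \<in> carrier B \<Longrightarrow> c \<in> carrier B \<Longrightarrow> lam a (b \<boxplus> c) = lam a b \<boxplus> lam a c"
  by (simp add: lambda_unfold brace_distrib add_assoc)

lemma lambda_group_hom: "a \<in> carrier B \<Longrightarrow> group_hom (add_grp B) (add_grp B) (lam a)"
  unfolding group_hom_def group_hom_axioms_def
  by (simp add: A.group_axioms) (rule homI; simp add: lambda_add)

lemma lambda_neg: "a \<in> carrier B \<Longrightarrow> b \<in> carrier B \<Longrightarrow> lam a (neg b) = neg (lam a b)"
  using group_hom.hom_inv[OF lambda_group_hom] by simp

lemma lambda_int_pow: "a \<in> carrier B \<Longrightarrow> b \<in> carrier B \<Longrightarrow>
   lam a (b [^]\<^bsub>add_grp B\<^esub> (k::int)) = (lam a b) [^]\<^bsub>add_grp B\<^esub> k"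
  using group_hom.hom_int_pow[OF lambda_group_hom] by simp

lemma lambda_mult:
  assumes "a \<in> carrier B" "b \<in> carrier B" "c \<in> carrier B"
  shows "lam (a \<odot> b) c = lam a (lam b c)"
proof -
  have "lam a (lam b c) = lam a (neg b) \<boxplus> lam a (b \<odot> c)"
    using assms by (simp add: lambda_unfold[of b] lambda_add)
  also have "\<dots> = neg (lam a b) \<boxplus> lam a (b \<odot> c)"
    using assms by (simp add: lambda_neg)
  also have "\<dots> = neg (a \<odot> b) \<boxplus> a \<boxplus> (neg a \<boxplus> a \<odot> (b \<odot> c))"
    using assms by (simp add: lambda_unfold[of a])
  also have "\<dots> = lam (a \<odot> b) c"
    using assms by (simp add: lambda_unfold add_assoc mult_assoc)
  finally show ?thesis ..
qed

lemma lambda_zero [simp]: "c \<in> carrier B \<Longrightarrow> lam ze c = c"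
  by (simp add: lambda_unfold)

lemma lambda_minv_cancel: "a \<in> carrier B \<Longrightarrow> c \<in> carrier B \<Longrightarrow> lam a (lam (minv a) c) = c"
  by (simp flip: lambda_mult)

lemma lambda_add_centre:
  assumes "a \<in> carrier B" "h \<in> add_centre B"
  shows "lam a h \<in> add_centre B"
  unfolding add_centre_def
proof (intro CollectI conjI ballI)
  have h: "h \<in> carrier B" using assms(2) by (simp add: add_centre_def)
  then show "lam a h \<in> carrier B" using assms(1) by simp
  fix c assume c: "c \<in> carrier B"
  have "lam a h \<boxplus> c = lam a (h \<boxplus> lam (minv a) c)"
    using assms(1) h c by (simp add: lambda_add lambda_minv_cancel)
  also have "\<dots> = lam a (lam (minv a) c \<boxplus> h)"
    using assms(2) c assms(1) by (simp add: add_centre_def)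
  also have "\<dots> = c \<boxplus> lam a h"
    using assms(1) h c by (simp add: lambda_add lambda_minv_cancel)
  finally show "lam a h \<boxplus> c = c \<boxplus> lam a h" .
qed

lemma Soc_mult: "h \<in> Soc B \<Longrightarrow> k \<in> carrier B \<Longrightarrow> h \<odot> k = h \<boxplus> k"
  by (simp add: Soc_def mult_eq_add_lambda)

lemma Soc_minv:
  assumes "h \<in> Soc B"
  shows "minv h = neg h"
proof -
  have h: "h \<in> carrier B" using assms by (simp add: Soc_def)
  have "h \<odot> neg h = ze" using Soc_mult[OF assms, of "neg h"] h by simp
  then have "minv h \<odot> (h \<odot> neg h) = minv h" using h by simp
  then show ?thesis using h by simp
qed

lemma conj_Soc:
  assumes x: "x \<in> carrier B" and h: "h \<in> Soc B"
  shows "x \<odot> h \<odot> minv x = lam x h"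
proof -
  have hc: "h \<in> carrier B" and lh: "\<And>c. c \<in> carrier B \<Longrightarrow> lam h c = c" and "h \<in> add_centre B"
    using h by (auto simp: Soc_def)
  then have central: "lam x h \<boxplus> c = c \<boxplus> lam x h" if "c \<in> carrier B" for c
    using lambda_add_centre[OF x] that by (simp add: add_centre_def)
  have "x \<odot> h \<odot> minv x = x \<odot> h \<boxplus> lam (x \<odot> h) (minv x)"
    using x hc by (simp add: mult_eq_add_lambda)
  also have "\<dots> = x \<boxplus> lam x h \<boxplus> lam x (minv x)"
  proof -
    have "lam (x \<odot> h) (minv x) = lam x (minv x)"
      using x hc by (simp add: lambda_mult lh)
    then show ?thesis
      using x hc by (subst mult_eq_add_lambda[of x h]) simp_all
  qed
  also have "\<dots> = x \<boxplus> lam x h \<boxplus> neg x"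
    using x by (simp add: lambda_unfold[of x "minv x"])
  also have "\<dots> = lam x h \<boxplus> x \<boxplus> neg x"
    using x central[of x] by simp
  also have "\<dots> = lam x h"
    using x hc by (simp add: add_assoc)
  finally show ?thesis .
qed

lemma ideal_if_subset_Soc:
  assumes S: "subgroup S (add_grp B)" and S_Soc: "S \<subseteq> Soc B"
    and S_lambda: "\<And>b. b \<in> carrier B \<Longrightarrow> lam b ` S \<subseteq> S"
  shows "brace_ideal S B"
proof -
  interpret S: subgroup S "add_grp B" by (rule S)
  have "S \<lhd> add_grp B"
    unfolding A.normal_inv_iff
  proof (intro conjI ballI S)
    fix x h assume x: "x \<in> carrier (add_grp B)" and h: "h \<in> S"
    then have "x \<boxplus> h = h \<boxplus> x" and hc: "h \<in> carrier B"
      using S_Soc by (auto simp: Soc_def add_centre_def)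
    then have "x \<boxplus> h \<boxplus> neg x = h"
      using x by (simp add: add_assoc)
    then show "x \<otimes>\<^bsub>add_grp B\<^esub> h \<otimes>\<^bsub>add_grp B\<^esub> inv\<^bsub>add_grp B\<^esub> x \<in> S"
      using h by simp
  qed
  moreover have "S \<lhd> mul_grp B"
    unfolding M.normal_inv_iff
  proof (intro conjI ballI M.subgroupI)
    fix h k assume h: "h \<in> S" and k: "k \<in> S"
    then have "h \<in> Soc B" "k \<in> carrier B" using S_Soc S.subset by (simp_all add: subsetD)
    then show "inv\<^bsub>mul_grp B\<^esub> h \<in> S" "h \<otimes>\<^bsub>mul_grp B\<^esub> k \<in> S"
      using h k S.m_closed[of h k] S.m_inv_closed[of h] by (simp_all add: Soc_minv Soc_mult)
  next
    fix x h assume x: "x \<in> carrier (mul_grp B)" and h: "h \<in> S"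
    then have "x \<odot> h \<odot> minv x = lam x h" using S_Soc by (simp add: conj_Soc subset_iff)
    moreover have "lam x h \<in> S" using S_lambda[of x] x h by auto
    ultimately show "x \<otimes>\<^bsub>mul_grp B\<^esub> h \<otimes>\<^bsub>mul_grp B\<^esub> inv\<^bsub>mul_grp B\<^esub> x \<in> S"
      by simp
  next
    show "S \<subseteq> carrier (mul_grp B)" "S \<noteq> {}"
      using S.subset S.one_closed by auto
  qed
  ultimately show ?thesis
    using S_lambda by (simp add: brace_ideal_def)
qed

end

lemma int_bij_shift_two:
  fixes f :: "int \<Rightarrow> int"
  assumes "bij f" and shift: "\<And>l. f (l + 2) = f l + p"
  shows "p = 2 \<or> p = -2"
proof -
  have lin: "f (2 * j + r) = f r + j * p" for j r
  proof (induction j rule: int_induct[where k = 0])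
    case (step1 i)
    then show ?case using shift[of "2 * i + r"] by (simp add: algebra_simps)
  next
    case (step2 i)
    then show ?case using shift[of "2 * (i - 1) + r"] by (simp add: algebra_simps)
  qed simp
  have f_inj: "f k = f l \<Longrightarrow> k = l" for k l
    using assms(1) by (simp add: bij_def inj_eq)
  have cover: "p dvd t - f 0 \<or> p dvd t - f 1" for t
  proof -
    obtain k where k: "t = f k" using assms(1) by (metis bij_def surj_def)
    have "k = 2 * (k div 2) + k mod 2" by simp
    then have "t = f (k mod 2) + (k div 2) * p" using lin k by metis
    moreover have "k mod 2 = 0 \<or> k mod 2 = 1" by auto
    ultimately show ?thesis by auto
  qed
  have odd: "\<not> p dvd f 1 - f 0"
  proof
    assume "p dvd f 1 - f 0"
    then obtain j where "f 1 = f 0 + j * p" by (auto simp: dvd_def algebra_simps)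
    then have "f 1 = f (2 * j + 0)" using lin[of j 0] by simp
    then have "1 = 2 * j + 0" by (rule f_inj)
    then show False by presburger
  qed
  have not_unit: "\<not> p dvd 1" using odd by (meson dvd_trans one_dvd)
  have "p dvd f 0 + 1 - f 1" using cover[of "f 0 + 1"] not_unit by simp
  moreover have "p dvd 2 \<or> p dvd f 0 + 2 - f 1" using cover[of "f 0 + 2"] by simp
  moreover have "\<not> p dvd f 0 + 2 - f 1" if "p dvd f 0 + 1 - f 1"
    using dvd_diff[OF _ that, of "f 0 + 2 - f 1"] not_unit by auto
  ultimately have "p dvd 2" by blast
  then have "\<bar>p\<bar> \<le> 2" using zdvd_imp_le[of "\<bar>p\<bar>" 2] by simp
  moreover have "p \<noteq> 0" using lin[of 1 0] f_inj[of 2 0] by auto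
  moreover have "\<bar>p\<bar> \<noteq> 1" using not_unit by auto
  ultimately show ?thesis by auto
qed


locale central_cyclic_ideal = skew_brace +
  fixes g
  assumes g_closed: "g \<in> carrier B"
    and inj_pow: "inj (\<lambda>k::int. g [^]\<^bsub>add_grp B\<^esub> k)"
    and ideal: "brace_ideal (range (\<lambda>k::int. g [^]\<^bsub>add_grp B\<^esub> k)) B"
    and central: "range (\<lambda>k::int. g [^]\<^bsub>add_grp B\<^esub> k) \<subseteq> add_centre B"
begin

definition pw :: "int \<Rightarrow> 'a" where "pw k = g [^]\<^bsub>add_grp B\<^esub> k"

(* Meaningful only on range pw, where it inverts the injective map pw. *)
definition idx :: "'a \<Rightarrow> int" where "idx y = (THE k. pw k = y)"

lemma pw_closed [simp]: "pw k \<in> carrier B"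
  using A.int_pow_closed g_closed by (simp add: pw_def)

lemma pw_add: "pw k \<boxplus> pw l = pw (k + l)"
  using A.int_pow_mult g_closed by (simp add: pw_def)

lemma pw_zero [simp]: "pw 0 = ze"
  by (simp add: pw_def)

lemma pw_one: "pw 1 = g"
  using g_closed by (simp add: pw_def)

lemma neg_pw: "neg (pw k) = pw (- k)"
  using A.int_pow_neg g_closed by (simp add: pw_def)

lemma pw_eq_iff [simp]: "pw k = pw l \<longleftrightarrow> k = l"
  using inj_pow by (auto simp: pw_def inj_def)

lemma pw_pow: "pw k [^]\<^bsub>add_grp B\<^esub> l = pw (k * l)"
  using A.int_pow_pow g_closed by (simp add: pw_def)

lemma pw_central: "x \<in> carrier B \<Longrightarrow> pw k \<boxplus> x = x \<boxplus> pw k"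
  using central by (auto simp: pw_def add_centre_def)

lemma idx_pw [simp]: "idx (pw k) = k"
  by (simp add: idx_def)

lemma pw_idx: "y \<in> range pw \<Longrightarrow> pw (idx y) = y"
  by auto

lemma lambda_pw_in_range: "b \<in> carrier B \<Longrightarrow> lam b (pw k) \<in> range pw"
proof -
  assume "b \<in> carrier B"
  then have "lam b ` range pw \<subseteq> range pw"
    using ideal by (simp add: brace_ideal_def pw_def[abs_def])
  then show ?thesis by blast
qed

lemma conj_pw_in_range: "b \<in> carrier B \<Longrightarrow> minv b \<odot> pw k \<odot> b \<in> range pw"
proof -
  assume b: "b \<in> carrier B"
  interpret N: normal "range pw" "mul_grp B"
    using ideal by (simp add: brace_ideal_def pw_def[abs_def])
  show ?thesis
    using N.inv_op_closed1[of b "pw k"] b by simp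
qed

definition lsign :: "'a \<Rightarrow> int" where "lsign b = idx (lam b g)"

lemma lambda_pw: "b \<in> carrier B \<Longrightarrow> lam b (pw k) = pw (lsign b * k)"
proof -
  assume b: "b \<in> carrier B"
  have "lam b g = pw (lsign b)"
    using lambda_pw_in_range[OF b, of 1] by (simp add: lsign_def pw_one pw_idx)
  then show ?thesis
    using lambda_int_pow[OF b g_closed, of k] b by (simp add: pw_def[of k] pw_pow)
qed

lemma lsign_mult: "a \<in> carrier B \<Longrightarrow> b \<in> carrier B \<Longrightarrow> lsign (a \<odot> b) = lsign a * lsign b"
  using lambda_mult[of a b "pw 1"] lambda_pw by simp

lemma lsign_ze: "lsign ze = 1"
  using lambda_pw[of ze 1] by simp

lemma lsign_cases: "b \<in> carrier B \<Longrightarrow> lsign b = 1 \<or> lsign b = -1"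
  using lsign_mult[of b "minv b"] lsign_ze by (auto simp: zmult_eq_1_iff)

lemma mult_pw: "pw k \<odot> pw l = pw (k + lsign (pw k) * l)"
  by (simp add: mult_eq_add_lambda lambda_pw pw_add)

lemma lsign_pw_two: "lsign (pw 2) = 1"
proof -
  \<comment> \<open>pw 2 = pw 1 \<odot> pw (lsign (pw 1)), a product of two elements of the same sign\<close>
  have lsign_mult_pw: "lsign (pw (k + lsign (pw k) * l)) = lsign (pw k) * lsign (pw l)" for k l
    using lsign_mult[of "pw k" "pw l"] by (simp add: mult_pw)
  consider "lsign (pw 1) = 1" | "lsign (pw 1) = -1" using lsign_cases[of "pw 1"] by auto
  then show ?thesis
  proof cases
    case 1
    then show ?thesis using lsign_mult_pw[of 1 1] by simp
  next
    case 2
    have "lsign (pw (-1)) \<noteq> 1"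
    proof
      assume "lsign (pw (-1)) = 1"
      then show False using lsign_mult_pw[of "-1" 1] 2 lsign_ze by simp
    qed
    then have "lsign (pw (-1)) = -1" using lsign_cases[of "pw (-1)"] by auto
    then show ?thesis using lsign_mult_pw[of 1 "-1"] 2 by simp
  qed
qed

lemma lsign_conj: "b \<in> carrier B \<Longrightarrow> y \<in> carrier B \<Longrightarrow> lsign (minv b \<odot> y \<odot> b) = lsign y"
  using lsign_mult[of "minv b" b] lsign_ze by (simp add: lsign_mult)

lemma conj_pw_two:
  assumes b: "b \<in> carrier B"
  shows "minv b \<odot> pw 2 \<odot> b = pw 2 \<or> minv b \<odot> pw 2 \<odot> b = pw (-2)"
proof -
  \<comment> \<open>Conjugation by b permutes range pw; since pw 2 acts trivially on range pw,
    the induced bijection of exponents is additive along 2\<int>.\<close>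
  define \<phi> where "\<phi> k = idx (minv b \<odot> pw k \<odot> b)" for k
  have conj: "minv b \<odot> pw k \<odot> b = pw (\<phi> k)" for k
    using conj_pw_in_range[OF b] by (simp add: \<phi>_def pw_idx)
  have "bij \<phi>"
  proof (rule bijI)
    show "inj \<phi>"
    proof (rule injI)
      fix k l assume "\<phi> k = \<phi> l"
      then have "b \<odot> (minv b \<odot> pw k \<odot> b) \<odot> minv b = b \<odot> (minv b \<odot> pw l \<odot> b) \<odot> minv b"
        by (simp add: conj)
      then show "k = l" using b by (simp add: mult_assoc)
    qed
    show "surj \<phi>"
      unfolding surj_def
    proof
      fix t
      have "minv (minv b) \<odot> pw t \<odot> minv b \<in> range pw" using b by (intro conj_pw_in_range) simp
      then obtain k where k: "b \<odot> pw t \<odot> minv b = pw k" using b by auto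
      have "pw (\<phi> k) = minv b \<odot> (b \<odot> pw t \<odot> minv b) \<odot> b" by (simp add: conj k)
      also have "\<dots> = pw t" using b by (simp add: mult_assoc)
      finally show "\<exists>k. t = \<phi> k" by auto
    qed
  qed
  moreover have "\<phi> (l + 2) = \<phi> l + \<phi> 2" for l
  proof -
    have "pw (\<phi> (l + 2)) = minv b \<odot> (pw 2 \<odot> pw l) \<odot> b"
      by (simp add: conj mult_pw lsign_pw_two add.commute)
    also have "\<dots> = (minv b \<odot> pw 2 \<odot> b) \<odot> (minv b \<odot> pw l \<odot> b)"
      using b by (simp add: mult_assoc)
    also have "\<dots> = pw (\<phi> 2 + lsign (pw (\<phi> 2)) * \<phi> l)"
      by (simp add: conj mult_pw)
    also have "lsign (pw (\<phi> 2)) = 1"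
      using lsign_conj[OF b, of "pw 2"] by (simp add: conj lsign_pw_two)
    finally show ?thesis by simp
  qed
  ultimately have "\<phi> 2 = 2 \<or> \<phi> 2 = -2"
    by (rule int_bij_shift_two)
  then show ?thesis by (auto simp: conj)
qed

lemma lambda_pw_two_eq:
  assumes c: "c \<in> carrier B"
  shows "\<exists>d \<in> {0, -4}. lam (pw 2) c = c \<boxplus> pw d"
proof -
  obtain p where p: "p = 2 \<or> p = -2" and cp: "minv c \<odot> pw 2 \<odot> c = pw p"
    using conj_pw_two[OF c] by blast
  have "lam (pw 2) c = neg (pw 2) \<boxplus> pw 2 \<odot> c"
    by (rule lambda_unfold)
  also have "\<dots> = neg (pw 2) \<boxplus> c \<odot> (minv c \<odot> pw 2 \<odot> c)"
    using c by (simp add: mult_assoc)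
  also have "\<dots> = neg (pw 2) \<boxplus> (c \<boxplus> pw (lsign c * p))"
    using c by (simp add: cp mult_eq_add_lambda[of c "pw p"] lambda_pw)
  also have "\<dots> = (pw (-2) \<boxplus> c) \<boxplus> pw (lsign c * p)"
    using c by (simp add: neg_pw add_assoc)
  also have "\<dots> = c \<boxplus> pw (lsign c * p - 2)"
    using c by (simp add: pw_central[OF c] add_assoc pw_add)
  finally show ?thesis
    using lsign_cases[OF c] p by auto
qed

lemma lambda_pw_two:
  assumes c: "c \<in> carrier B"
  shows "lam (pw 2) c = c"
proof -
  \<comment> \<open>The defect of lam (pw 2) is additive in c but takes only the values 0 and -4.\<close>
  obtain d where d: "d \<in> {0, -4}" and ld: "lam (pw 2) c = c \<boxplus> pw d"
    using lambda_pw_two_eq[OF c] by blast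
  have "c \<boxplus> c \<in> carrier B" using c by simp
  then obtain d' where d': "d' \<in> {0, -4}" and ld': "lam (pw 2) (c \<boxplus> c) = c \<boxplus> c \<boxplus> pw d'"
    using lambda_pw_two_eq by blast
  have "c \<boxplus> c \<boxplus> pw d' = c \<boxplus> pw d \<boxplus> (c \<boxplus> pw d)"
    using lambda_add[of "pw 2" c c] c ld ld' by simp
  also have "\<dots> = c \<boxplus> (pw d \<boxplus> c) \<boxplus> pw d"
    using c by (simp add: add_assoc)
  also have "\<dots> = c \<boxplus> c \<boxplus> pw (d + d)"
    using c by (simp add: pw_central[OF c] add_assoc pw_add)
  finally have "d' = d + d"
    using c A.l_cancel[of "c \<boxplus> c" "pw d'" "pw (d + d)"] by simp
  then have "d = 0" using d d' by auto
  then show ?thesis using ld c by simp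
qed

lemma lambda_pw_even:
  assumes c: "c \<in> carrier B"
  shows "lam (pw (2 * j)) c = c"
proof (induction j rule: int_induct[where k = 0])
  case base
  then show ?case using c by simp
next
  case (step1 i)
  have "pw (2 * (i + 1)) = pw 2 \<odot> pw (2 * i)"
    by (simp add: mult_pw lsign_pw_two algebra_simps)
  then show ?case
    using step1 c by (simp add: lambda_mult lambda_pw_two)
next
  case (step2 i)
  have "pw (2 * i) = pw 2 \<odot> pw (2 * (i - 1))"
    by (simp add: mult_pw lsign_pw_two algebra_simps)
  then have "lam (pw (2 * i)) c = lam (pw (2 * (i - 1))) c"
    using c by (simp add: lambda_mult lambda_pw_two)
  then show ?case using step2 by simp
qed

definition evens :: "'a set" where "evens = range (\<lambda>j. pw (2 * j))"

lemma pw_in_evens_iff: "pw k \<in> evens \<longleftrightarrow> even k"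
  by (auto simp: evens_def)

lemma evens_subset_Soc: "evens \<subseteq> Soc B"
  using lambda_pw_even pw_central by (auto simp: evens_def Soc_def add_centre_def)

lemma evens_inf_cyclic: "add_inf_cyclic B evens"
  unfolding add_inf_cyclic_def
proof
  have "inj (\<lambda>j. pw (2 * j))" by (auto simp: inj_def)
  then show "infinite evens"
    unfolding evens_def using finite_imageD infinite_UNIV_int by blast
  have "evens = range (\<lambda>k::int. pw 2 [^]\<^bsub>add_grp B\<^esub> k)"
    by (simp add: evens_def pw_pow)
  then show "\<exists>h\<in>carrier B. evens = range (\<lambda>k::int. h [^]\<^bsub>add_grp B\<^esub> k)"
    by auto
qed

lemma evens_ideal: "brace_ideal evens B"
proof (rule ideal_if_subset_Soc[OF A.subgroupI evens_subset_Soc])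
  show "evens \<subseteq> carrier (add_grp B)" "evens \<noteq> {}"
    by (auto simp: evens_def)
  fix a b assume "a \<in> evens" "b \<in> evens"
  then obtain i j where "a = pw (2 * i)" "b = pw (2 * j)" by (auto simp: evens_def)
  then show "inv\<^bsub>add_grp B\<^esub> a \<in> evens" "a \<otimes>\<^bsub>add_grp B\<^esub> b \<in> evens"
    by (simp_all add: pw_in_evens_iff neg_pw pw_add)
next
  fix b assume "b \<in> carrier B"
  then have "lam b (pw (2 * j)) \<in> evens" for j
    by (simp add: pw_in_evens_iff lambda_pw)
  then show "lam b ` evens \<subseteq> evens"
    by (auto simp: evens_def)
qed

end

locale brace_quotient = skew_brace +
  fixes I
  assumes ideal_I: "brace_ideal I B"
begin

abbreviation Q where "Q \<equiv> quot_brace B I"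
abbreviation proj where "proj a \<equiv> I #>\<^bsub>add_grp B\<^esub> a"

lemma normal_add: "I \<lhd> add_grp B" and normal_mult: "I \<lhd> mul_grp B"
  and lambda_I: "b \<in> carrier B \<Longrightarrow> h \<in> I \<Longrightarrow> lam b h \<in> I"
  using ideal_I by (auto simp: brace_ideal_def)

lemma I_subset: "I \<subseteq> carrier B"
  using normal_imp_subgroup[OF normal_add] subgroup.subset by fastforce

lemma mult_coset_eq_add_coset:
  assumes a: "a \<in> carrier B"
  shows "I #>\<^bsub>mul_grp B\<^esub> a = proj a"
proof -
  have "a <#\<^bsub>mul_grp B\<^esub> I = a <#\<^bsub>add_grp B\<^esub> I"
  proof (intro equalityI subsetI)
    fix x assume "x \<in> a <#\<^bsub>mul_grp B\<^esub> I"
    then obtain h where h: "h \<in> I" "x = a \<odot> h" unfolding l_coset_def by auto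
    then have "x = a \<boxplus> lam a h" using mult_eq_add_lambda a I_subset by auto
    then show "x \<in> a <#\<^bsub>add_grp B\<^esub> I" using lambda_I[OF a h(1)] unfolding l_coset_def by auto
  next
    fix x assume "x \<in> a <#\<^bsub>add_grp B\<^esub> I"
    then obtain h where h: "h \<in> I" "x = a \<boxplus> h" unfolding l_coset_def by auto
    have hc: "h \<in> carrier B" using h I_subset by auto
    have "a \<odot> lam (minv a) h = a \<boxplus> h"
      using a hc by (simp add: mult_eq_add_lambda lambda_minv_cancel)
    then show "x \<in> a <#\<^bsub>mul_grp B\<^esub> I"
      using h lambda_I[of "minv a" h] a unfolding l_coset_def by force
  qed
  then show ?thesis
    using normal.coset_eq[OF normal_mult] normal.coset_eq[OF normal_add] a by simp
qed

lemma add_grp_quot: "add_grp Q = add_grp B Mod I"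
  by (simp add: add_grp_def quot_brace_def FactGroup_def)

lemma mul_grp_quot: "mul_grp Q = mul_grp B Mod I"
proof -
  have "rcosets\<^bsub>mul_grp B\<^esub> I = rcosets\<^bsub>add_grp B\<^esub> I"
    unfolding RCOSETS_def using mult_coset_eq_add_coset by simp
  then show ?thesis
    by (simp add: FactGroup_def mul_grp_def[of Q] quot_brace_def)
qed

lemma carrier_quot: "carrier Q = proj ` carrier B"
  by (auto simp: quot_brace_def RCOSETS_def)

lemma bzero_quot: "bzero Q = I"
  by (simp add: quot_brace_def)

lemma proj_add_hom: "group_hom (add_grp B) (add_grp Q) proj"
  unfolding group_hom_def group_hom_axioms_def add_grp_quot
  using A.group_axioms normal.factorgroup_is_group[OF normal_add] normal.r_coset_hom_Mod[OF normal_add]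
  by simp

lemma proj_mult_hom: "group_hom (mul_grp B) (mul_grp Q) proj"
proof -
  have "(\<lambda>a. I #>\<^bsub>mul_grp B\<^esub> a) \<in> hom (mul_grp B) (mul_grp Q)"
    unfolding mul_grp_quot by (rule normal.r_coset_hom_Mod[OF normal_mult])
  then have "proj \<in> hom (mul_grp B) (mul_grp Q)"
    by (simp add: hom_def Pi_def mult_coset_eq_add_coset)
  then show ?thesis
    unfolding group_hom_def group_hom_axioms_def mul_grp_quot
    using M.group_axioms normal.factorgroup_is_group[OF normal_mult] by simp
qed

lemma proj_add: "a \<in> carrier B \<Longrightarrow> b \<in> carrier B \<Longrightarrow> proj (a \<boxplus> b) = bplus Q (proj a) (proj b)"
  using group_hom.hom_mult[OF proj_add_hom] by simp

lemma proj_mult: "a \<in> carrier B \<Longrightarrow> b \<in> carrier B \<Longrightarrow> proj (a \<odot> b) = btimes Q (proj a) (proj b)"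
  using group_hom.hom_mult[OF proj_mult_hom] by simp

lemma proj_neg: "a \<in> carrier B \<Longrightarrow> proj (neg a) = bneg Q (proj a)"
  using group_hom.hom_inv[OF proj_add_hom] by (simp add: bneg_def)

lemma proj_lambda: "a \<in> carrier B \<Longrightarrow> b \<in> carrier B \<Longrightarrow> proj (lam a b) = blambda Q (proj a) (proj b)"
  by (simp add: lambda_unfold blambda_def[of Q] proj_add proj_mult proj_neg)

lemma quot_is_brace: "is_brace Q"
  unfolding is_brace_def
proof (intro conjI ballI)
  show "group (add_grp Q)" "group (mul_grp Q)"
    using proj_add_hom proj_mult_hom by (simp_all add: group_hom_def group_hom_axioms_def)
  fix U V W assume "U \<in> carrier Q" "V \<in> carrier Q" "W \<in> carrier Q"
  then obtain a b c where abc: "a \<in> carrier B" "b \<in> carrier B" "c \<in> carrier B"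
    and "U = proj a" "V = proj b" "W = proj c"
    unfolding carrier_quot by auto
  then show "btimes Q U (bplus Q V W) = bplus Q (bplus Q (btimes Q U V) (bneg Q U)) (btimes Q U W)"
    using brace_distrib[OF abc] by (simp flip: proj_add proj_mult proj_neg)
qed

lemma proj_eq_I_iff: "a \<in> carrier B \<Longrightarrow> proj a = I \<longleftrightarrow> a \<in> I"
  using A.rcos_self[of a I] A.coset_join2[of a I] normal_imp_subgroup[OF normal_add] I_subset
  by auto

lemma ideal_image:
  assumes K: "brace_ideal K B"
  shows "brace_ideal (quot_sub B K I) Q"
proof -
  have K_sub: "K \<subseteq> carrier B"
    using K normal_imp_subgroup subgroup.subset by (fastforce simp: brace_ideal_def)
  have surj: "proj ` carrier (add_grp B) = carrier (add_grp Q)"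
    "proj ` carrier (mul_grp B) = carrier (mul_grp Q)"
    by (simp_all add: carrier_quot)
  have "proj ` K \<lhd> add_grp Q" "proj ` K \<lhd> mul_grp Q"
    using K normal.surj_hom_normal_subgroup[OF _ proj_add_hom surj(1)]
      normal.surj_hom_normal_subgroup[OF _ proj_mult_hom surj(2)]
    by (simp_all add: brace_ideal_def)
  moreover have "blambda Q U ` proj ` K \<subseteq> proj ` K" if U: "U \<in> carrier Q" for U
  proof -
    obtain b where b: "b \<in> carrier B" "U = proj b" using U carrier_quot by auto
    have "blambda Q U (proj k) = proj (lam b k)" if "k \<in> K" for k
      using that b K_sub by (auto simp: proj_lambda)
    moreover have "lam b k \<in> K" if "k \<in> K" for k
      using that b K by (auto simp: brace_ideal_def)
    ultimately show ?thesis by auto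
  qed
  ultimately show ?thesis
    by (simp add: brace_ideal_def quot_sub_def)
qed

lemma ideal_vimage:
  assumes Z: "brace_ideal Z Q"
  shows "brace_ideal {a \<in> carrier B. proj a \<in> Z} B"
proof -
  have "{a \<in> carrier B. proj a \<in> Z} \<lhd> add_grp B" "{a \<in> carrier B. proj a \<in> Z} \<lhd> mul_grp B"
    using group_hom.normal_vimage[OF proj_add_hom] group_hom.normal_vimage[OF proj_mult_hom] Z
    by (simp_all add: brace_ideal_def)
  moreover have "lam b a \<in> {a \<in> carrier B. proj a \<in> Z}" if "b \<in> carrier B" "a \<in> carrier B" "proj a \<in> Z" for a b
    using that Z by (auto simp: proj_lambda brace_ideal_def carrier_quot)
  ultimately show ?thesis
    by (auto simp: brace_ideal_def)
qed

end

lemma (in skew_brace) card_quot_sub_eq_two: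
  assumes J: "subgroup J (add_grp B)" and "J \<subseteq> K" "K \<subseteq> carrier B"
    and c: "c \<in> K" "c \<notin> J"
    and split: "\<And>a. a \<in> K \<Longrightarrow> a \<in> J \<or> a \<boxplus> neg c \<in> J"
  shows "card (quot_sub B K J) = 2"
proof -
  interpret J: subgroup J "add_grp B" by (rule J)
  have cc: "c \<in> carrier B" using c assms(3) by auto
  have "quot_sub B K J = {J, J #>\<^bsub>add_grp B\<^esub> c}"
  proof (intro equalityI subsetI)
    fix U assume "U \<in> quot_sub B K J"
    then obtain a where a: "a \<in> K" "U = J #>\<^bsub>add_grp B\<^esub> a" by (auto simp: quot_sub_def)
    have ac: "a \<in> carrier B" using a assms(3) by auto
    from split[OF a(1)] show "U \<in> {J, J #>\<^bsub>add_grp B\<^esub> c}"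
    proof
      assume "a \<in> J"
      then show ?thesis using a A.coset_join2[of a J] J ac by simp
    next
      assume "a \<boxplus> neg c \<in> J"
      then have "a \<in> J #>\<^bsub>add_grp B\<^esub> c"
        using J.rcos_module_rev[OF A.group_axioms, of c a] ac cc by simp
      then show ?thesis using a A.repr_independence[of a J c] J cc by simp
    qed
  next
    fix U assume "U \<in> {J, J #>\<^bsub>add_grp B\<^esub> c}"
    moreover have "J #>\<^bsub>add_grp B\<^esub> ze = J" using A.coset_join2[of ze J] J J.one_closed by simp
    ultimately show "U \<in> quot_sub B K J"
      using c(1) J.one_closed assms(2) unfolding quot_sub_def by force
  qed
  moreover have "J \<noteq> J #>\<^bsub>add_grp B\<^esub> c"
    using A.rcos_self[of c J] J cc c(2) by auto
  ultimately show ?thesis by simp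
qed

context brace_quotient
begin

lemma vimage_proj_subset:
  assumes "subgroup K (add_grp B)" "I \<subseteq> K" "Z \<subseteq> proj ` K"
  shows "{a \<in> carrier B. proj a \<in> Z} \<subseteq> K"
proof
  fix a assume a: "a \<in> {a \<in> carrier B. proj a \<in> Z}"
  then obtain k where k: "k \<in> K" "proj a = proj k" using assms(3) by auto
  have "a \<in> proj k"
    using A.rcos_self[of a I] normal_imp_subgroup[OF normal_add] a k(2) by simp
  then obtain h where "h \<in> I" "a = h \<boxplus> k" by (auto simp: r_coset_def)
  then show "a \<in> K" using subgroup.m_closed[OF assms(1), of h k] assms(2) k(1) by auto
qed

lemma quot_sub_vimage_proj:
  assumes "Z \<subseteq> carrier Q"
  shows "quot_sub B {a \<in> carrier B. proj a \<in> Z} I = Z"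
  using assms by (auto simp: quot_sub_def carrier_quot)

lemma subset_vimage_proj:
  assumes "bzero Q \<in> Z"
  shows "I \<subseteq> {a \<in> carrier B. proj a \<in> Z}"
proof
  fix a assume "a \<in> I"
  moreover from this have "a \<in> carrier B" using I_subset by auto
  ultimately have "proj a = bzero Q"
    using proj_eq_I_iff by (simp add: bzero_quot)
  with \<open>a \<in> carrier B\<close> show "a \<in> {a \<in> carrier B. proj a \<in> Z}"
    using assms by simp
qed

lemma central_cyclic_ideal_quot:
  assumes K: "brace_ideal K B" and g: "g \<in> carrier Q"
    and Y: "quot_sub B K I = range (\<lambda>k::int. g [^]\<^bsub>add_grp Q\<^esub> k)"
    and infinite: "infinite (quot_sub B K I)" and central: "quot_sub B K I \<subseteq> add_centre Q"
  shows "central_cyclic_ideal Q g"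
proof unfold_locales
  show "is_brace Q" by (rule quot_is_brace)
  show "inj (\<lambda>k::int. g [^]\<^bsub>add_grp Q\<^esub> k)"
    using group.inj_int_pow_if_infinite[of "add_grp Q" g] proj_add_hom g infinite Y
    by (simp add: group_hom_def group_hom_axioms_def)
qed (use g ideal_image[OF K] central Y in simp_all)

lemma central_cyclic_step_refinement:
  assumes K: "brace_ideal K B" and IK: "I \<subseteq> K"
    and cyclic: "add_inf_cyclic Q (quot_sub B K I)" and central: "quot_sub B K I \<subseteq> add_centre Q"
  obtains J where "brace_ideal J B" "I \<subseteq> J" "J \<subseteq> K"
    "add_inf_cyclic Q (quot_sub B J I)" "quot_sub B J I \<subseteq> Soc Q" "card (quot_sub B K J) = 2"
proof -
  obtain g where "g \<in> carrier Q" and Y: "quot_sub B K I = range (\<lambda>k::int. g [^]\<^bsub>add_grp Q\<^esub> k)"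
    using cyclic by (auto simp: add_inf_cyclic_def)
  then interpret Y: central_cyclic_ideal Q g
    using central_cyclic_ideal_quot[OF K] cyclic central by (simp add: add_inf_cyclic_def)
  have KA: "subgroup K (add_grp B)" and K_sub: "K \<subseteq> carrier B"
    using K normal_imp_subgroup subgroup.subset by (fastforce simp: brace_ideal_def)+
  have range_pw: "range Y.pw = proj ` K"
    using Y by (simp add: Y.pw_def[abs_def] quot_sub_def)
  define J where "J = {a \<in> carrier B. proj a \<in> Y.evens}"
  have J: "brace_ideal J B" "J \<subseteq> K" "I \<subseteq> J" "quot_sub B J I = Y.evens"
  proof -
    show "brace_ideal J B"
      unfolding J_def by (rule ideal_vimage[OF Y.evens_ideal])
    show "J \<subseteq> K"
      unfolding J_def using range_pw by (intro vimage_proj_subset[OF KA IK]) (auto simp: Y.evens_def)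
    show "I \<subseteq> J"
      unfolding J_def using Y.pw_in_evens_iff[of 0] by (intro subset_vimage_proj) simp
    show "quot_sub B J I = Y.evens"
      unfolding J_def by (rule quot_sub_vimage_proj) (auto simp: Y.evens_def)
  qed
  obtain c where c: "c \<in> K" "proj c = Y.pw 1"
    using range_pw by (metis imageE rangeI)
  have "card (quot_sub B K J) = 2"
  proof (rule card_quot_sub_eq_two[OF _ J(2) K_sub c(1)])
    show "subgroup J (add_grp B)"
      using J(1) normal_imp_subgroup by (auto simp: brace_ideal_def)
    show "c \<notin> J" using c by (simp add: J_def Y.pw_in_evens_iff)
    fix a assume "a \<in> K"
    then have ac: "a \<in> carrier B" "c \<in> carrier B" using c K_sub by auto
    obtain k where k: "proj a = Y.pw k" using range_pw \<open>a \<in> K\<close> by (metis imageI rangeE)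
    have "proj (a \<boxplus> neg c) = Y.pw (k - 1)"
      using ac by (simp add: proj_add proj_neg k c bneg_def Y.neg_pw Y.pw_add)
    then show "a \<in> J \<or> a \<boxplus> neg c \<in> J"
      using ac k by (auto simp: J_def Y.pw_in_evens_iff)
  qed
  then show thesis
    using that J Y.evens_inf_cyclic Y.evens_subset_Soc by simp
qed

end

definition soc_step :: "('a, 'b) brace_scheme \<Rightarrow> 'a set \<Rightarrow> 'a set \<Rightarrow> bool" where
  "soc_step B P R \<longleftrightarrow>
     (add_inf_cyclic (quot_brace B P) (quot_sub B R P) \<and> quot_sub B R P \<subseteq> Soc (quot_brace B P)) \<or>
     Factorial_Ring.prime (card (quot_sub B R P))"

definition central_step :: "('a, 'b) brace_scheme \<Rightarrow> 'a set \<Rightarrow> 'a set \<Rightarrow> bool" where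
  "central_step B P R \<longleftrightarrow>
     (add_inf_cyclic (quot_brace B P) (quot_sub B R P) \<and> quot_sub B R P \<subseteq> add_centre (quot_brace B P)) \<or>
     Factorial_Ring.prime (card (quot_sub B R P))"

lemma supersoluble_iff_soc_steps:
  "supersoluble B \<longleftrightarrow> (\<exists>I n. ideal_chain B I n \<and> (\<forall>i<n. soc_step B (I i) (I (Suc i))))"
  by (simp add: supersoluble_def soc_step_def Let_def)

lemma weakly_supersoluble_iff_central_steps:
  "weakly_supersoluble B \<longleftrightarrow> (\<exists>I n. ideal_chain B I n \<and> (\<forall>i<n. central_step B (I i) (I (Suc i))))"
  by (simp add: weakly_supersoluble_def central_step_def Let_def)

lemma central_step_if_soc_step: "soc_step B P R \<Longrightarrow> central_step B P R"
  by (auto simp: soc_step_def central_step_def Soc_def)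

lemma (in skew_brace) central_step_refinement:
  assumes "brace_ideal P B" "brace_ideal R B" "P \<subseteq> R" "central_step B P R"
  shows "soc_step B P R \<or>
    (\<exists>J. brace_ideal J B \<and> P \<subseteq> J \<and> J \<subseteq> R \<and> soc_step B P J \<and> soc_step B J R)"
proof (cases "Factorial_Ring.prime (card (quot_sub B R P))")
  case True
  then show ?thesis by (simp add: soc_step_def)
next
  case False
  interpret brace_quotient B P by unfold_locales (rule assms(1))
  have "add_inf_cyclic Q (quot_sub B R P)" "quot_sub B R P \<subseteq> add_centre Q"
    using assms(4) False by (simp_all add: central_step_def)
  then obtain J where "brace_ideal J B" "P \<subseteq> J" "J \<subseteq> R"
    "add_inf_cyclic Q (quot_sub B J P)" "quot_sub B J P \<subseteq> Soc Q" "card (quot_sub B R J) = 2"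
    by (rule central_cyclic_step_refinement[OF assms(2,3)])
  then show ?thesis
    by (auto simp: soc_step_def)
qed

definition stepwise_chain ::
  "('a, 'b) brace_scheme \<Rightarrow> ('a set \<Rightarrow> 'a set \<Rightarrow> bool) \<Rightarrow> (nat \<Rightarrow> 'a set) \<Rightarrow> nat \<Rightarrow> bool" where
  "stepwise_chain B S I n \<longleftrightarrow> I 0 = {bzero B} \<and> (\<forall>i\<le>n. brace_ideal (I i) B) \<and>
     (\<forall>i<n. I i \<subseteq> I (Suc i) \<and> S (I i) (I (Suc i)))"

lemma stepwise_chain_extend:
  assumes "stepwise_chain B S I n" "brace_ideal R B" "I n \<subseteq> R" "S (I n) R"
  shows "stepwise_chain B S (I(Suc n := R)) (Suc n)"
  using assms by (auto simp: stepwise_chain_def less_Suc_eq le_Suc_eq)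

lemma chain_refinement:
  assumes chain: "ideal_chain B I n"
    and refine: "\<And>i. i < n \<Longrightarrow> S (I i) (I (Suc i)) \<or>
      (\<exists>J. brace_ideal J B \<and> I i \<subseteq> J \<and> J \<subseteq> I (Suc i) \<and> S (I i) J \<and> S J (I (Suc i)))"
  shows "\<exists>I' n'. ideal_chain B I' n' \<and> (\<forall>i<n'. S (I' i) (I' (Suc i)))"
proof -
  have "\<exists>I' n'. stepwise_chain B S I' n' \<and> I' n' = I m" if "m \<le> n" for m
    using that
  proof (induction m)
    case 0
    have "stepwise_chain B S (\<lambda>_. I 0) 0"
      using chain by (auto simp: stepwise_chain_def ideal_chain_def)
    then show ?case by blast
  next
    case (Suc m)
    then obtain I' n' where I': "stepwise_chain B S I' n'" "I' n' = I m" by auto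
    have ideals: "brace_ideal (I m) B" "brace_ideal (I (Suc m)) B" "I m \<subseteq> I (Suc m)"
      using chain Suc.prems by (auto simp: ideal_chain_def)
    have "S (I m) (I (Suc m)) \<or>
      (\<exists>J. brace_ideal J B \<and> I m \<subseteq> J \<and> J \<subseteq> I (Suc m) \<and> S (I m) J \<and> S J (I (Suc m)))"
      using refine[of m] Suc.prems by simp
    then show ?case
    proof (elim disjE exE conjE)
      assume "S (I m) (I (Suc m))"
      then show ?case
        using stepwise_chain_extend[OF I'(1) ideals(2)] I'(2) ideals(3) by fastforce
    next
      fix J assume J: "brace_ideal J B" "I m \<subseteq> J" "J \<subseteq> I (Suc m)" "S (I m) J" "S J (I (Suc m))"
      have "stepwise_chain B S (I'(Suc n' := J)) (Suc n')"
        using stepwise_chain_extend[OF I'(1) J(1)] I'(2) J by simp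
      from stepwise_chain_extend[OF this ideals(2)] show ?case
        using J by fastforce
    qed
  qed
  then obtain I' n' where "stepwise_chain B S I' n'" "I' n' = I n" by blast
  then have "ideal_chain B I' n'" "\<forall>i<n'. S (I' i) (I' (Suc i))"
    using chain by (auto simp: stepwise_chain_def ideal_chain_def)
  then show ?thesis by blast
qed

theorem theorem3p17:
  fixes B :: "('a, 'b) brace_scheme"
  assumes "is_brace B"
  shows "weakly_supersoluble B \<longleftrightarrow> supersoluble B"
proof
  assume "weakly_supersoluble B"
  then obtain I n where chain: "ideal_chain B I n" and steps: "\<forall>i<n. central_step B (I i) (I (Suc i))"
    by (auto simp: weakly_supersoluble_iff_central_steps)
  interpret skew_brace B by unfold_locales (rule assms)
  have "soc_step B (I i) (I (Suc i)) \<or> (\<exists>J. brace_ideal J B \<and> I i \<subseteq> J \<and> J \<subseteq> I (Suc i) \<and>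
      soc_step B (I i) J \<and> soc_step B J (I (Suc i)))" if "i < n" for i
    using that chain steps by (intro central_step_refinement) (auto simp: ideal_chain_def)
  then show "supersoluble B"
    unfolding supersoluble_iff_soc_steps by (rule chain_refinement[OF chain])
next
  assume "supersoluble B"
  then show "weakly_supersoluble B"
    by (auto simp: supersoluble_iff_soc_steps weakly_supersoluble_iff_central_steps
        intro: central_step_if_soc_step)
qed

end
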